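(* Let $G$ be a connected signed digraph. (a) If $G$ has a negative cycle, then there exists a degree-bounded finite dynamical system on $G$ without fixed point. (b) If $G$ has a positive cycle, then there exists a degree-bounded finite dynamical system on $G$ with (exactly) two fixed points. (c) More generally, if $G$ has $k\ge 1$ pairwise vertex-disjoint positive cycles, then there exists a degree-bounded finite dynamical system on $G$ with (exactly) $2^k$ fixed points.
   Context: A finite dynamical system (FDS) with $n$ components is a map $f=(f_1,\dots,f_n):X\to X$ where $X=X_1\times\cdots\times X_n$ and each $X_i$ is a nonempty finite interval of integers; a fixed point is $x\in X$ with $f(x)=x$. A signed digraph is a pair $G=(V,E)$ with $E\subseteq V\times V\times\{+,-\}$; $(j,i,s)\in E$ is an arc from $j$ to $i$ of sign $s$ (loops allowed; $G$ may have both a positive and a negative arc from $j$ to $i$). The in-degree $d^{\mathrm{in}}_G(i)$ is the number of arcs entering $i$ and the out-degree $d^{\mathrm{out}}_G(i)$ the number of arcs leaving $i$ (positive and negative arcs counted separately). $G$ is connected if its underlying undirected graph is connected. A cycle of $G$ is a directed cycle without repeated vertices, i.e. a sequence of distinct vertices $i_1,\dots,i_\ell$ together with chosen arcs from $i_1$ to $i_2$, ..., from $i_{\ell-1}$ to $i_\ell$ and from $i_\ell$ to $i_1$ (a loop is a cycle of length 1); its sign is the product of the signs of its arcs. The interaction graph of an FDS $f$ is the signed digraph on $\{1,\dots,n\}$ with a positive (resp. negative) arc from $j$ to $i$ iff there is $x\in X$ with $x_j<\max(X_j)$ such that $f_i(x+e_j)-f_i(x)$ is positive (resp. negative), $e_j$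 the $j$-th unit vector. $f$ is an FDS on $G$ if $G$ is its interaction graph. $f$ is degree-bounded if, with $G$ its interaction graph, for every $i$: $|X_i|=2$ if $d^{\mathrm{out}}_G(i)=0<d^{\mathrm{in}}_G(i)$, and $|X_i|\le d^{\mathrm{out}}_G(i)+1$ otherwise. *)

theory Defs
  imports Main
begin

datatype sign = Pos | Neg

text \<open>A signed digraph on the vertex type 'v (all elements of 'v are vertices):
  an arc (j, i, s) goes from j to i and has sign s.\<close>
type_synonym 'v sdigraph = "('v \<times> 'v \<times> sign) set"

definition indeg :: "'v sdigraph \<Rightarrow> 'v \<Rightarrow> nat" where
  "indeg E i = card {(j, s). (j, i, s) \<in> E}"

definition outdeg :: "'v sdigraph \<Rightarrow> 'v \<Rightarrow> nat" where
  "outdeg E i = card {(k, s). (i, k, s) \<in> E}"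

definition sconnected :: "'v sdigraph \<Rightarrow> bool" where
  "sconnected E \<longleftrightarrow>
     (let R = {(j, i). \<exists>s. (j, i, s) \<in> E} in \<forall>u v. (u, v) \<in> (R \<union> R\<inverse>)\<^sup>*)"

text \<open>A cycle is a nonempty list of (vertex, sign of the outgoing chosen arc),
  with distinct vertices, the k-th arc going from the k-th vertex to the next
  one (cyclically).\<close>
definition is_cycle :: "'v sdigraph \<Rightarrow> ('v \<times> sign) list \<Rightarrow> bool" where
  "is_cycle E c \<longleftrightarrow> c \<noteq> [] \<and> distinct (map fst c) \<and>
     (\<forall>k < length c. (fst (c ! k), fst (c ! ((k + 1) mod length c)), snd (c ! k)) \<in> E)"

definition cycle_positive :: "('v \<times> sign) list \<Rightarrow> bool" where
  "cycle_positive c \<longleftrightarrow> even (length (filter (\<lambda>s. s = Neg) (map snd c)))"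

definition positive_cycle :: "'v sdigraph \<Rightarrow> ('v \<times> sign) list \<Rightarrow> bool" where
  "positive_cycle E c \<longleftrightarrow> is_cycle E c \<and> cycle_positive c"

definition negative_cycle :: "'v sdigraph \<Rightarrow> ('v \<times> sign) list \<Rightarrow> bool" where
  "negative_cycle E c \<longleftrightarrow> is_cycle E c \<and> \<not> cycle_positive c"

definition cycle_vertices :: "('v \<times> sign) list \<Rightarrow> 'v set" where
  "cycle_vertices c = set (map fst c)"

text \<open>FDS: X = product of integer intervals [lo i, hi i]; f : X \<rightarrow> X
  (represented by a total function whose values outside X are irrelevant).\<close>
definition box :: "('v \<Rightarrow> int) \<Rightarrow> ('v \<Rightarrow> int) \<Rightarrow> ('v \<Rightarrow> int) set" where
  "box lo hi = {x. \<forall>i. lo i \<le> x i \<and> x i \<le> hi i}"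

definition is_fds :: "('v \<Rightarrow> int) \<Rightarrow> ('v \<Rightarrow> int) \<Rightarrow> (('v \<Rightarrow> int) \<Rightarrow> ('v \<Rightarrow> int)) \<Rightarrow> bool" where
  "is_fds lo hi f \<longleftrightarrow> (\<forall>i. lo i \<le> hi i) \<and> (\<forall>x \<in> box lo hi. f x \<in> box lo hi)"

definition interaction_graph ::
  "('v \<Rightarrow> int) \<Rightarrow> ('v \<Rightarrow> int) \<Rightarrow> (('v \<Rightarrow> int) \<Rightarrow> ('v \<Rightarrow> int)) \<Rightarrow> 'v sdigraph" where
  "interaction_graph lo hi f =
     {(j, i, s). \<exists>x \<in> box lo hi. x j < hi j \<and>
        ((s = Pos \<and> f (x(j := x j + 1)) i - f x i > 0) \<or>
         (s = Neg \<and> f (x(j := x j + 1)) i - f x i < 0))}"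

definition fds_on ::
  "'v sdigraph \<Rightarrow> ('v \<Rightarrow> int) \<Rightarrow> ('v \<Rightarrow> int) \<Rightarrow> (('v \<Rightarrow> int) \<Rightarrow> ('v \<Rightarrow> int)) \<Rightarrow> bool" where
  "fds_on E lo hi f \<longleftrightarrow> is_fds lo hi f \<and> interaction_graph lo hi f = E"

text \<open>|X_i| = hi i - lo i + 1.\<close>
definition degree_bounded ::
  "('v \<Rightarrow> int) \<Rightarrow> ('v \<Rightarrow> int) \<Rightarrow> (('v \<Rightarrow> int) \<Rightarrow> ('v \<Rightarrow> int)) \<Rightarrow> bool" where
  "degree_bounded lo hi f \<longleftrightarrow>
     (let G = interaction_graph lo hi f in
      \<forall>i. (if outdeg G i = 0 \<and> 0 < indeg G i
           then hi i - lo i + 1 = 2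
           else hi i - lo i + 1 \<le> int (outdeg G i) + 1))"

definition fixed_points ::
  "('v \<Rightarrow> int) \<Rightarrow> ('v \<Rightarrow> int) \<Rightarrow> (('v \<Rightarrow> int) \<Rightarrow> ('v \<Rightarrow> int)) \<Rightarrow> ('v \<Rightarrow> int) set" where
  "fixed_points lo hi f = {x \<in> box lo hi. f x = x}"

end

theory Submission
  imports Defs
begin

text \<open>The system is a threshold network on G. An arc j \<rightarrow> i of sign s switches at a position
  thr(j, i, s) of the domain {0..outdeg j} of j, and i takes the value 1 iff the total contribution of
  its sources reaches a threshold. Thresholds strictly inside the range of that contribution make
  every arc of G, and no other, visible in the interaction graph. Fixed points are Boolean, and on
  Boolean states only arcs at position 1 act. Positions are chosen so that on the given cycles every
  vertex copies or negates its predecessor, while the arcs at position 1 among the other vertices are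
  well founded (by a counting argument and connectivity), so that those vertices are forced to
  constants. The fixed points are then the Boolean labellings consistent along the cycles: none if
  a cycle is negative, and 2 choices per cycle if all are positive.\<close>

instance sign :: finite
proof
  have "(UNIV :: sign set) = {Pos, Neg}" using sign.exhaust by auto
  then show "finite (UNIV :: sign set)" by (metis finite.emptyI finite.insertI)
qed

definition sign_act :: "sign \<Rightarrow> int \<Rightarrow> int" where
  "sign_act s v = (if s = Pos then v else 1 - v)"

section \<open>Threshold networks\<close>

locale arc_thresholds =
  fixes E :: "('v::finite) sdigraph" and thr :: "'v \<times> 'v \<times> sign \<Rightarrow> int"
  assumes thr_range: "\<And>j i s. (j, i, s) \<in> E \<Longrightarrow> 1 \<le> thr (j, i, s) \<and> thr (j, i, s) \<le> int (outdeg E j)"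
    and thr_parallel: "\<And>j i. (j, i, Pos) \<in> E \<Longrightarrow> (j, i, Neg) \<in> E \<Longrightarrow> thr (j, i, Pos) \<noteq> thr (j, i, Neg)"
begin

definition sources :: "'v \<Rightarrow> 'v set" where
  "sources i = {j. \<exists>s. (j, i, s) \<in> E}"

definition upper :: "'v \<Rightarrow> int" where
  "upper j = (if outdeg E j = 0 then (if indeg E j > 0 then 1 else 0) else int (outdeg E j))"

definition contrib :: "'v \<Rightarrow> 'v \<Rightarrow> int \<Rightarrow> int" where
  "contrib i j v =
     (if (j, i, Pos) \<in> E \<and> thr (j, i, Pos) \<le> v then 1 else 0) +
     (if (j, i, Neg) \<in> E \<and> v < thr (j, i, Neg) then 1 else 0)"

definition contrib_lo :: "'v \<Rightarrow> 'v \<Rightarrow> int" where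
  "contrib_lo i j =
     (if (j, i, Pos) \<in> E \<and> (j, i, Neg) \<in> E \<and> thr (j, i, Pos) < thr (j, i, Neg) then 1 else 0)"

definition contrib_floor :: "'v \<Rightarrow> int" where
  "contrib_floor i = (\<Sum>j\<in>UNIV. contrib_lo i j)"

definition weight :: "('v \<Rightarrow> int) \<Rightarrow> 'v \<Rightarrow> int" where
  "weight x i = (\<Sum>k\<in>UNIV. contrib i k (x k))"

definition live :: "'v \<Rightarrow> 'v \<Rightarrow> bool" where
  "live j i \<longleftrightarrow> (\<exists>s. (j, i, s) \<in> E \<and> thr (j, i, s) = 1)"

lemma contrib_bounds: "contrib_lo i j \<le> contrib i j v \<and> contrib i j v \<le> contrib_lo i j + 1"
  using thr_parallel[of j i] unfolding contrib_def contrib_lo_def by auto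

lemma contrib_nonsource: "j \<notin> sources i \<Longrightarrow> contrib i j v = 0 \<and> contrib_lo i j = 0"
  unfolding contrib_def contrib_lo_def sources_def by auto

lemma contrib_increase_imp_Pos: "contrib i j v < contrib i j w \<Longrightarrow> v \<le> w \<Longrightarrow> (j, i, Pos) \<in> E"
  unfolding contrib_def by (auto split: if_splits)

lemma contrib_decrease_imp_Neg: "contrib i j w < contrib i j v \<Longrightarrow> v \<le> w \<Longrightarrow> (j, i, Neg) \<in> E"
  unfolding contrib_def by (auto split: if_splits)

lemma contrib_not_live: "\<not> live j i \<Longrightarrow> v \<in> {0, 1} \<Longrightarrow> contrib i j v = contrib i j 0"
  using thr_range[of j i Pos] thr_range[of j i Neg] unfolding live_def contrib_def by force

lemma contrib_at_Pos_thr: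
  "(j, i, Pos) \<in> E \<Longrightarrow>
     contrib i j (thr (j, i, Pos) - 1) = contrib_lo i j \<and> contrib i j (thr (j, i, Pos)) = contrib_lo i j + 1"
  using thr_parallel[of j i] unfolding contrib_def contrib_lo_def by auto

lemma contrib_at_Neg_thr:
  "(j, i, Neg) \<in> E \<Longrightarrow>
     contrib i j (thr (j, i, Neg) - 1) = contrib_lo i j + 1 \<and> contrib i j (thr (j, i, Neg)) = contrib_lo i j"
  using thr_parallel[of j i] unfolding contrib_def contrib_lo_def by auto

lemma upper_eq_outdeg: "(j, i, s) \<in> E \<Longrightarrow> upper j = int (outdeg E j)"
  using thr_range[of j i s] unfolding upper_def by auto

lemma upper_nonneg: "0 \<le> upper j"
  unfolding upper_def by auto

lemma upper_pos: "sources i \<noteq> {} \<Longrightarrow> 1 \<le> upper i"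
proof -
  assume "sources i \<noteq> {}"
  then have "{(j, s). (j, i, s) \<in> E} \<noteq> {}" unfolding sources_def by auto
  then have "indeg E i > 0" unfolding indeg_def by (simp add: card_gt_0_iff)
  then show ?thesis unfolding upper_def by auto
qed

lemma contrib_attains_bounds:
  assumes "j \<in> sources i"
  obtains vl vh where "0 \<le> vl" "vl \<le> upper j" "contrib i j vl = contrib_lo i j"
    and "0 \<le> vh" "vh \<le> upper j" "contrib i j vh = contrib_lo i j + 1"
proof -
  obtain s where s: "(j, i, s) \<in> E" using assms unfolding sources_def by auto
  have u: "upper j = int (outdeg E j)" using upper_eq_outdeg[OF s] .
  show ?thesis
  proof (cases s)
    case Pos
    with s thr_range[OF s] contrib_at_Pos_thr[of j i] u show ?thesis
      by (intro that[of "thr (j, i, Pos) - 1" "thr (j, i, Pos)"]) auto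
  next
    case Neg
    with s thr_range[OF s] contrib_at_Neg_thr[of j i] u show ?thesis
      by (intro that[of "thr (j, i, Neg)" "thr (j, i, Neg) - 1"]) auto
  qed
qed

definition n_sources :: "'v \<Rightarrow> int" where
  "n_sources i = int (card (sources i))"

lemma n_sources_pos: "sources i \<noteq> {} \<Longrightarrow> 1 \<le> n_sources i"
  unfolding n_sources_def by (simp add: Suc_leI card_gt_0_iff)

lemma weight_ge_floor: "contrib_floor i \<le> weight x i"
  unfolding weight_def contrib_floor_def by (rule sum_mono) (use contrib_bounds in auto)

lemma weight_ge_floor_plus_1:
  assumes "contrib i j (x j) = contrib_lo i j + 1"
  shows "contrib_floor i + 1 \<le> weight x i"
proof -
  define d where "d k = contrib i k (x k) - contrib_lo i k" for k
  have "d j \<le> sum d UNIV"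
    by (rule member_le_sum) (use contrib_bounds in \<open>auto simp: d_def\<close>)
  moreover have "sum d UNIV = weight x i - contrib_floor i"
    unfolding d_def contrib_floor_def weight_def sum_subtractf by simp
  ultimately show ?thesis using assms unfolding d_def by simp
qed

lemma weight_le_ceiling_minus_1:
  assumes "j \<in> sources i" and "contrib i j (x j) = contrib_lo i j"
  shows "weight x i \<le> contrib_floor i + n_sources i - 1"
proof -
  define d where "d k = contrib_lo i k + of_bool (k \<in> sources i) - contrib i k (x k)" for k
  have "d k \<ge> 0" for k
    using contrib_bounds[of i k "x k"] contrib_nonsource[of k i] unfolding d_def
    by (cases "k \<in> sources i") auto
  then have "d j \<le> sum d UNIV" by (intro member_le_sum) auto
  moreover have "sum d UNIV = contrib_floor i + n_sources i - weight x i"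
    unfolding d_def contrib_floor_def n_sources_def weight_def sum_subtractf sum.distrib
    by (simp add: sum_of_bool_eq)
  ultimately show ?thesis using assms unfolding d_def by simp
qed

lemma weight_update: "weight (x(j := v)) i = weight x i - contrib i j (x j) + contrib i j v"
proof -
  have "weight (x(j := v)) i = contrib i j v + (\<Sum>k\<in>UNIV - {j}. contrib i k (x k))"
    unfolding weight_def by (subst sum.remove[of UNIV j]) auto
  also have "\<dots> = contrib i j v + (weight x i - contrib i j (x j))"
    unfolding weight_def by (subst sum.remove[of UNIV j]) auto
  finally show ?thesis by simp
qed

text \<open>Switching m of the other sources to their maximal contribution places the weight anywhere
  in the threshold range; this is what makes every arc visible in the interaction graph.\<close>
lemma ex_state_with_weight:
  assumes "j \<in> sources i" and "0 \<le> m" and "m < n_sources i"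
  obtains x where "x \<in> box (\<lambda>_. 0) upper"
    and "\<And>v. weight (x(j := v)) i = contrib_floor i - contrib_lo i j + contrib i j v + m"
proof -
  have "\<exists>vl vh. 0 \<le> vl \<and> vl \<le> upper k \<and> contrib i k vl = contrib_lo i k \<and>
      0 \<le> vh \<and> vh \<le> upper k \<and> contrib i k vh = contrib_lo i k + 1" if "k \<in> sources i" for k
    using contrib_attains_bounds[OF that] by metis
  then obtain VL VH where V: "\<And>k. k \<in> sources i \<Longrightarrow>
      0 \<le> VL k \<and> VL k \<le> upper k \<and> contrib i k (VL k) = contrib_lo i k \<and>
      0 \<le> VH k \<and> VH k \<le> upper k \<and> contrib i k (VH k) = contrib_lo i k + 1"
    by metis
  have "nat m \<le> card (sources i - {j})"
    using assms unfolding n_sources_def by auto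
  then obtain A where A: "A \<subseteq> sources i - {j}" "card A = nat m"
    by (rule obtain_subset_with_card_n)
  define x where "x k = (if k \<in> A then VH k else if k \<in> sources i then VL k else 0)" for k
  have "x \<in> box (\<lambda>_. 0) upper"
    unfolding box_def x_def using V A(1) upper_nonneg by auto
  moreover have "weight (x(j := v)) i = contrib_floor i - contrib_lo i j + contrib i j v + m" for v
  proof -
    have other: "contrib i k (x k) = contrib_lo i k + of_bool (k \<in> A)" for k
      using V[of k] A(1) contrib_nonsource[of k i] unfolding x_def by auto
    have "weight x i = contrib_floor i + int (card A)"
      unfolding weight_def contrib_floor_def other sum.distrib by (simp add: sum_of_bool_eq)
    moreover have "x j = VL j" using A(1) assms(1) unfolding x_def by auto
    ultimately show ?thesis
      using weight_update[of x j v i] V[OF assms(1)] A(2) assms(2) by simp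
  qed
  ultimately show ?thesis using that by blast
qed

definition net :: "('v \<Rightarrow> int) \<Rightarrow> ('v \<Rightarrow> int) \<Rightarrow> 'v \<Rightarrow> int" where
  "net \<theta> x i = (if \<theta> i \<le> weight x i then 1 else 0)"

definition admissible :: "('v \<Rightarrow> int) \<Rightarrow> bool" where
  "admissible \<theta> \<longleftrightarrow>
     (\<forall>i. contrib_floor i + 1 \<le> \<theta> i \<and> (sources i \<noteq> {} \<longrightarrow> \<theta> i \<le> contrib_floor i + n_sources i))"

lemma net_01: "net \<theta> x i \<in> {0, 1}"
  unfolding net_def by auto

lemma net_no_sources:
  assumes "admissible \<theta>" and "sources i = {}"
  shows "net \<theta> x i = 0"
proof -
  have "weight x i = contrib_floor i"
    unfolding weight_def contrib_floor_def using assms(2) contrib_nonsource by simp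
  moreover have "contrib_floor i + 1 \<le> \<theta> i" using assms(1) unfolding admissible_def by blast
  ultimately show ?thesis unfolding net_def by simp
qed

lemma net_in_box:
  assumes "admissible \<theta>"
  shows "net \<theta> x \<in> box (\<lambda>_. 0) upper"
proof -
  have "0 \<le> net \<theta> x i \<and> net \<theta> x i \<le> upper i" for i
    using net_01[of \<theta> x i] net_no_sources[OF assms, of i x] upper_pos[of i] upper_nonneg[of i]
    by (cases "sources i = {}") auto
  then show ?thesis unfolding box_def by auto
qed

lemma is_fds_net: "admissible \<theta> \<Longrightarrow> is_fds (\<lambda>_. 0) upper (net \<theta>)"
  unfolding is_fds_def using net_in_box upper_nonneg by auto

lemma interaction_graph_net_subset: "interaction_graph (\<lambda>_. 0) upper (net \<theta>) \<subseteq> E"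
proof
  fix e assume "e \<in> interaction_graph (\<lambda>_. 0) upper (net \<theta>)"
  then obtain j i s x where e: "e = (j, i, s)"
    and change: "(s = Pos \<and> net \<theta> (x(j := x j + 1)) i - net \<theta> x i > 0) \<or>
      (s = Neg \<and> net \<theta> (x(j := x j + 1)) i - net \<theta> x i < 0)"
    unfolding interaction_graph_def by auto
  have u: "weight (x(j := x j + 1)) i = weight x i - contrib i j (x j) + contrib i j (x j + 1)"
    by (rule weight_update)
  from change show "e \<in> E"
  proof
    assume "s = Pos \<and> net \<theta> (x(j := x j + 1)) i - net \<theta> x i > 0"
    then have "s = Pos" and "contrib i j (x j) < contrib i j (x j + 1)"
      using u unfolding net_def by (auto split: if_splits)
    then show ?thesis using contrib_increase_imp_Pos e by force
  next
    assume "s = Neg \<and> net \<theta> (x(j := x j + 1)) i - net \<theta> x i < 0"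
    then have "s = Neg" and "contrib i j (x j + 1) < contrib i j (x j)"
      using u unfolding net_def by (auto split: if_splits)
    then show ?thesis using contrib_decrease_imp_Neg e by force
  qed
qed

lemma interaction_graph_net_supset:
  assumes "admissible \<theta>"
  shows "E \<subseteq> interaction_graph (\<lambda>_. 0) upper (net \<theta>)"
proof
  fix e assume "e \<in> E"
  then obtain j i s where e: "e = (j, i, s)" and arc: "(j, i, s) \<in> E" by (cases e) auto
  have src: "j \<in> sources i" using arc unfolding sources_def by auto
  then have "contrib_floor i + 1 \<le> \<theta> i \<and> \<theta> i \<le> contrib_floor i + n_sources i"
    using assms unfolding admissible_def by auto
  then obtain x where x: "x \<in> box (\<lambda>_. 0) upper"
    and w: "\<And>v. weight (x(j := v)) i = contrib i j v + (\<theta> i - 1) - contrib_lo i j"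
    using ex_state_with_weight[OF src, of "\<theta> i - 1 - contrib_floor i"] by auto
  define y where "y = x(j := thr (j, i, s) - 1)"
  have y_box: "y \<in> box (\<lambda>_. 0) upper" and y_j: "y j < upper j"
    using x thr_range[OF arc] upper_eq_outdeg[OF arc] unfolding y_def box_def by auto
  have "weight y i = contrib i j (thr (j, i, s) - 1) + (\<theta> i - 1) - contrib_lo i j"
    and "weight (y(j := y j + 1)) i = contrib i j (thr (j, i, s)) + (\<theta> i - 1) - contrib_lo i j"
    using w unfolding y_def by simp_all
  then have "(s = Pos \<and> net \<theta> (y(j := y j + 1)) i - net \<theta> y i > 0) \<or>
    (s = Neg \<and> net \<theta> (y(j := y j + 1)) i - net \<theta> y i < 0)"
    using contrib_at_Pos_thr[of j i] contrib_at_Neg_thr[of j i] arc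
    unfolding net_def by (cases s) auto
  then show "e \<in> interaction_graph (\<lambda>_. 0) upper (net \<theta>)"
    unfolding interaction_graph_def e using y_box y_j by blast
qed

lemma interaction_graph_net: "admissible \<theta> \<Longrightarrow> interaction_graph (\<lambda>_. 0) upper (net \<theta>) = E"
  using interaction_graph_net_subset interaction_graph_net_supset by blast

lemma degree_bounded_net: "admissible \<theta> \<Longrightarrow> degree_bounded (\<lambda>_. 0) upper (net \<theta>)"
  unfolding degree_bounded_def interaction_graph_net Let_def upper_def by auto

end

section \<open>Forcing the vertices off the cycles\<close>

text \<open>Only arcs of threshold 1 act on Boolean states (lemma contrib_not_live). S will be the
  union of the cycles: out of a vertex of S the only such arc is its cycle arc, and a vertex outside
  S with such an arc has a single out-neighbour.\<close>
locale threshold_network = arc_thresholds E thr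
  for E :: "('v::finite) sdigraph" and thr :: "'v \<times> 'v \<times> sign \<Rightarrow> int" +
  fixes S :: "'v set" and pred :: "'v \<Rightarrow> 'v" and insign :: "'v \<Rightarrow> sign"
  assumes connected: "sconnected E" and S_nonempty: "S \<noteq> {}"
    and pred_arc: "\<And>i. i \<in> S \<Longrightarrow> (pred i, i, insign i) \<in> E \<and> pred i \<in> S \<and> thr (pred i, i, insign i) = 1"
    and thr_1_from_S:
      "\<And>j i s. (j, i, s) \<in> E \<Longrightarrow> thr (j, i, s) = 1 \<Longrightarrow> j \<in> S \<Longrightarrow> i \<in> S \<and> pred i = j \<and> insign i = s"
    and thr_1_outside_S:
      "\<And>j i s i' s'. (j, i, s) \<in> E \<Longrightarrow> thr (j, i, s) = 1 \<Longrightarrow> j \<notin> S \<Longrightarrow> (j, i', s') \<in> E \<Longrightarrow> i' = i"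
begin

text \<open>A vertex off S is grounded at stage n + 1 if some source acts on it trivially at Boolean
  states or is grounded at stage n; its value at fixed points is then forced.\<close>
primrec grounded :: "nat \<Rightarrow> 'v set" where
  "grounded 0 = {}"
| "grounded (Suc n) =
     {i. i \<notin> S \<and> (sources i = {} \<or> (\<exists>j\<in>sources i. \<not> live j i \<or> j \<in> grounded n))}"

lemma grounded_not_in_S: "i \<in> grounded n \<Longrightarrow> i \<notin> S"
  by (cases n) auto

definition ungrounded :: "'v set" where
  "ungrounded = {i. i \<notin> S \<and> (\<forall>n. i \<notin> grounded n)}"

lemma ungrounded_sources:
  assumes "w \<in> ungrounded"
  shows "sources w \<noteq> {} \<and> (\<forall>j\<in>sources w. live j w \<and> j \<in> ungrounded)"
proof -
  have w: "w \<notin> S" "\<And>n. w \<notin> grounded n" using assms unfolding ungrounded_def by auto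
  have "live j w \<and> j \<in> ungrounded" if j: "j \<in> sources w" for j
  proof -
    have live: "live j w" using w(1) w(2)[of "Suc 0"] j by auto
    have "j \<notin> grounded n" for n using w(1) w(2)[of "Suc n"] j live by auto
    moreover have "j \<notin> S"
      using live thr_1_from_S w(1) unfolding live_def by blast
    ultimately show ?thesis using live unfolding ungrounded_def by auto
  qed
  moreover have "sources w \<noteq> {}" using w(1) w(2)[of "Suc 0"] by auto
  ultimately show ?thesis by blast
qed

lemma ungrounded_source_out_arc:
  assumes "w \<in> ungrounded" and "j \<in> sources w" and "(j, i, s) \<in> E"
  shows "i = w"
proof -
  have "live j w" and "j \<notin> S"
    using ungrounded_sources[OF assms(1)] assms(2) unfolding ungrounded_def by auto
  then show ?thesis using thr_1_outside_S assms(3) unfolding live_def by blast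
qed

text \<open>Choosing an in-neighbour inside the ungrounded set for each of its vertices is injective,
  because such an in-neighbour has a single out-neighbour; by finiteness it is onto.\<close>
lemma ungrounded_out_arc:
  assumes "j \<in> ungrounded" and "(j, i, s) \<in> E"
  shows "i \<in> ungrounded"
proof -
  define pick where "pick w = (SOME j. j \<in> sources w)" for w
  have pick: "pick w \<in> sources w \<and> pick w \<in> ungrounded" if "w \<in> ungrounded" for w
    using ungrounded_sources[OF that] some_in_eq unfolding pick_def by metis
  have "inj_on pick ungrounded"
  proof (rule inj_onI)
    fix w w' assume w: "w \<in> ungrounded" and w': "w' \<in> ungrounded" and eq: "pick w = pick w'"
    obtain s' where "(pick w', w', s') \<in> E" using pick[OF w'] unfolding sources_def by auto
    then show "w = w'" using ungrounded_source_out_arc[OF w] pick[OF w] eq by metis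
  qed
  moreover have "pick ` ungrounded \<subseteq> ungrounded" using pick by auto
  ultimately have "pick ` ungrounded = ungrounded"
    by (simp add: card_image card_subset_eq)
  then obtain w where "w \<in> ungrounded" "j = pick w" using assms(1) by auto
  then show ?thesis using ungrounded_source_out_arc pick assms(2) by metis
qed

lemma ex_grounded:
  assumes "i \<notin> S"
  shows "\<exists>n. i \<in> grounded n"
proof (rule ccontr)
  assume "\<nexists>n. i \<in> grounded n"
  then have i: "i \<in> ungrounded" using assms unfolding ungrounded_def by auto
  define R where "R = {(j, i). \<exists>s. (j, i, s) \<in> E}"
  obtain v where v: "v \<in> S" using S_nonempty by auto
  have "(i, v) \<in> (R \<union> R\<inverse>)\<^sup>*" using connected unfolding sconnected_def R_def Let_def by simp
  then have "v \<in> ungrounded"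
  proof (induction rule: rtrancl_induct)
    case base
    show ?case using i .
  next
    case (step y z)
    then show ?case
      using ungrounded_out_arc ungrounded_sources unfolding R_def sources_def by blast
  qed
  then show False using v unfolding ungrounded_def by auto
qed

definition rank :: "'v \<Rightarrow> nat" where
  "rank i = (LEAST n. i \<in> grounded n)"

lemma grounded_rank: "i \<notin> S \<Longrightarrow> i \<in> grounded (rank i)"
  unfolding rank_def by (metis LeastI_ex ex_grounded)

lemma rank_le: "i \<in> grounded n \<Longrightarrow> rank i \<le> n"
  unfolding rank_def by (rule Least_le)

definition anchor :: "'v \<Rightarrow> 'v" where
  "anchor i = (SOME j. j \<in> sources i \<and> (\<not> live j i \<or> j \<in> grounded (rank i - 1)))"

lemma anchor_props:
  assumes "i \<notin> S" and "sources i \<noteq> {}"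
  shows "anchor i \<in> sources i"
    and "live (anchor i) i \<Longrightarrow> anchor i \<notin> S \<and> rank (anchor i) < rank i"
proof -
  have "i \<in> grounded (rank i)" using grounded_rank[OF assms(1)] .
  then obtain n where n: "rank i = Suc n" and ex: "\<exists>j. j \<in> sources i \<and> (\<not> live j i \<or> j \<in> grounded n)"
    using assms(2) by (cases "rank i") auto
  from ex have a: "anchor i \<in> sources i \<and> (\<not> live (anchor i) i \<or> anchor i \<in> grounded n)"
    unfolding anchor_def n diff_Suc_1 by (rule someI_ex)
  then show "anchor i \<in> sources i" by simp
  assume "live (anchor i) i"
  then have "anchor i \<in> grounded n" using a by simp
  then show "anchor i \<notin> S \<and> rank (anchor i) < rank i"
    using grounded_not_in_S rank_le n by (simp add: less_Suc_eq_le)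
qed

definition anchor_high :: "('v \<Rightarrow> int) \<Rightarrow> 'v \<Rightarrow> bool" where
  "anchor_high c i \<longleftrightarrow>
     contrib i (anchor i) (if live (anchor i) i then c (anchor i) else 0) = contrib_lo i (anchor i) + 1"

definition anchor_rule :: "('v \<Rightarrow> int) \<Rightarrow> 'v \<Rightarrow> int" where
  "anchor_rule c i = of_bool (sources i \<noteq> {} \<and> anchor_high c i)"

lemma anchor_rule_cong:
  "(sources i \<noteq> {} \<Longrightarrow> live (anchor i) i \<Longrightarrow> c (anchor i) = c' (anchor i)) \<Longrightarrow>
     anchor_rule c i = anchor_rule c' i"
  unfolding anchor_rule_def anchor_high_def by (cases "sources i = {}"; cases "live (anchor i) i") auto

lemma ex_anchor_rule_solution_below_rank: "\<exists>c. \<forall>i. i \<notin> S \<and> rank i < N \<longrightarrow> c i = anchor_rule c i"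
proof (induction N)
  case 0
  show ?case by simp
next
  case (Suc N)
  then obtain c where c: "\<And>i. i \<notin> S \<Longrightarrow> rank i < N \<Longrightarrow> c i = anchor_rule c i" by blast
  define c' where "c' i = (if i \<notin> S \<and> rank i = N then anchor_rule c i else c i)" for i
  have same: "anchor_rule c' i = anchor_rule c i" if "i \<notin> S" "rank i \<le> N" for i
  proof (rule anchor_rule_cong)
    assume "sources i \<noteq> {}" "live (anchor i) i"
    then have "anchor i \<notin> S" "rank (anchor i) < rank i" using anchor_props that(1) by auto
    then show "c' (anchor i) = c (anchor i)" using that(2) unfolding c'_def by auto
  qed
  have "c' i = anchor_rule c' i" if "i \<notin> S" "rank i < Suc N" for i
    using c[of i] same[of i] that unfolding c'_def by auto
  then show ?case by blast
qed

definition ground_val :: "'v \<Rightarrow> int" where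
  "ground_val = (SOME c. \<forall>i. i \<notin> S \<longrightarrow> c i = anchor_rule c i)"

lemma ground_val_eq: "i \<notin> S \<Longrightarrow> ground_val i = anchor_rule ground_val i"
proof -
  obtain c where c: "\<forall>i. i \<notin> S \<and> rank i < Suc (Max (range rank)) \<longrightarrow> c i = anchor_rule c i"
    using ex_anchor_rule_solution_below_rank by blast
  have "rank i < Suc (Max (range rank))" for i
    by (simp add: le_imp_less_Suc)
  then have "\<exists>c. \<forall>i. i \<notin> S \<longrightarrow> c i = anchor_rule c i" using c by blast
  then have "\<forall>i. i \<notin> S \<longrightarrow> ground_val i = anchor_rule ground_val i"
    unfolding ground_val_def by (rule someI_ex)
  then show "i \<notin> S \<Longrightarrow> ground_val i = anchor_rule ground_val i" by blast
qed

lemma ground_val_01: "i \<notin> S \<Longrightarrow> ground_val i \<in> {0, 1}"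
  using ground_val_eq unfolding anchor_rule_def by simp

definition ref_state :: "'v \<Rightarrow> 'v \<Rightarrow> int" where
  "ref_state i k =
     (if k = pred i then (if insign i = Pos then 0 else 1) else if live k i then ground_val k else 0)"

text \<open>On S the threshold lies just above the weight of a reference state in which the cycle arc
  contributes minimally, so i follows its cycle predecessor. Off S a single maximal contribution
  (floor + 1) or all of them (floor + n_sources) are required according as the anchor contributes
  maximally at the ground values or not, so i takes its ground value.\<close>
definition threshold :: "'v \<Rightarrow> int" where
  "threshold i =
     (if i \<in> S then weight (ref_state i) i + 1
      else if sources i = {} \<or> anchor_high ground_val i then contrib_floor i + 1
      else contrib_floor i + n_sources i)"

lemma pred_source: "i \<in> S \<Longrightarrow> pred i \<in> sources i"
  using pred_arc unfolding sources_def by blast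

lemma contrib_pred:
  assumes "i \<in> S" and "v \<in> {0, 1}"
  shows "contrib i (pred i) v = contrib i (pred i) (ref_state i (pred i)) + sign_act (insign i) v"
proof -
  have arc: "(pred i, i, insign i) \<in> E" "thr (pred i, i, insign i) = 1" using pred_arc[OF assms(1)] by auto
  have "(pred i, i, s) \<in> E \<Longrightarrow> s \<noteq> insign i \<Longrightarrow> 2 \<le> thr (pred i, i, s)" for s
    using thr_parallel[of "pred i" i] thr_range[of "pred i" i s] arc by (cases s; cases "insign i") force+
  then show ?thesis
    using arc assms(2) unfolding contrib_def ref_state_def sign_act_def by (cases "insign i") force+
qed

lemma contrib_ref_state_pred:
  assumes "i \<in> S"
  shows "contrib i (pred i) (ref_state i (pred i)) = contrib_lo i (pred i)"
proof -
  define v :: int where "v = of_bool (insign i = Pos)"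
  have "contrib i (pred i) v = contrib i (pred i) (ref_state i (pred i)) + 1"
    using contrib_pred[OF assms, of v] unfolding v_def sign_act_def by auto
  then show ?thesis
    using contrib_bounds[of i "pred i" v] contrib_bounds[of i "pred i" "ref_state i (pred i)"] by auto
qed

lemma admissible_threshold: "admissible threshold"
  unfolding admissible_def
proof (intro allI conjI impI)
  fix i
  show "contrib_floor i + 1 \<le> threshold i"
    using weight_ge_floor n_sources_pos[of i] unfolding threshold_def by force
  assume "sources i \<noteq> {}"
  then show "threshold i \<le> contrib_floor i + n_sources i"
  proof (cases "i \<in> S")
    case True
    then show ?thesis
      using weight_le_ceiling_minus_1[of "pred i" i "ref_state i"] pred_source contrib_ref_state_pred
      unfolding threshold_def by simp
  qed (use n_sources_pos[of i] in \<open>auto simp: threshold_def\<close>)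
qed

lemma net_outside_S:
  assumes bool: "\<And>k. x k \<in> {0, 1}" and i: "i \<notin> S"
    and anchor: "sources i \<noteq> {} \<Longrightarrow> live (anchor i) i \<Longrightarrow> x (anchor i) = ground_val (anchor i)"
  shows "net threshold x i = ground_val i"
proof (cases "sources i = {}")
  case True
  then show ?thesis
    using net_no_sources[OF admissible_threshold] ground_val_eq[OF i] unfolding anchor_rule_def by simp
next
  case False
  define j where "j = anchor i"
  have j: "j \<in> sources i" using anchor_props(1)[OF i False] unfolding j_def .
  have same: "contrib i j (x j) = contrib i j (if live j i then ground_val j else 0)"
    using anchor[OF False] contrib_not_live[OF _ bool[of j]] unfolding j_def by (cases "live j i") auto
  have g: "ground_val i = of_bool (anchor_high ground_val i)"
    using ground_val_eq[OF i] False unfolding anchor_rule_def by simp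
  show ?thesis
  proof (cases "anchor_high ground_val i")
    case True
    then have "contrib i j (x j) = contrib_lo i j + 1" using same unfolding anchor_high_def j_def by simp
    then show ?thesis
      using weight_ge_floor_plus_1 g True i unfolding net_def threshold_def by simp
  next
    case high: False
    then have "contrib i j (x j) = contrib_lo i j"
      using same contrib_bounds[of i j] unfolding anchor_high_def j_def by (smt (verit))
    then show ?thesis
      using weight_le_ceiling_minus_1[OF j, of x] g high i False unfolding net_def threshold_def by simp
  qed
qed

lemma weight_cong: "(\<And>k. contrib i k (x k) = contrib i k (y k)) \<Longrightarrow> weight x i = weight y i"
  unfolding weight_def by simp

lemma net_on_S:
  assumes bool: "\<And>k. x k \<in> {0, 1}" and i: "i \<in> S" and ground: "\<And>k. k \<notin> S \<Longrightarrow> x k = ground_val k"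
  shows "net threshold x i = sign_act (insign i) (x (pred i))"
proof -
  have "contrib i k (x k) = contrib i k (ref_state i k)" if "k \<noteq> pred i" for k
  proof (cases "live k i")
    case True
    then have "k \<notin> S" using thr_1_from_S that unfolding live_def by blast
    then show ?thesis using ground True that unfolding ref_state_def by simp
  next
    case False
    then show ?thesis using contrib_not_live[OF False bool[of k]] that unfolding ref_state_def by simp
  qed
  then have "weight x i = weight ((ref_state i)(pred i := x (pred i))) i"
    by (intro weight_cong) simp
  also have "\<dots> = weight (ref_state i) i + sign_act (insign i) (x (pred i))"
    using weight_update contrib_pred[OF i bool] by simp
  finally show ?thesis
    using i bool[of "pred i"] unfolding net_def threshold_def sign_act_def by auto
qed

lemma fixed_point_outside_S:
  assumes bool: "\<And>k. x k \<in> {0, 1}" and fixed: "net threshold x = x" and "i \<notin> S"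
  shows "x i = ground_val i"
  using assms(3)
proof (induction "rank i" arbitrary: i rule: less_induct)
  case less
  have "net threshold x i = ground_val i"
  proof (rule net_outside_S[OF bool less.prems])
    assume "sources i \<noteq> {}" "live (anchor i) i"
    then show "x (anchor i) = ground_val (anchor i)"
      using anchor_props(2)[OF less.prems] less.hyps by blast
  qed
  then show ?case using fixed by metis
qed

lemma fixed_points_net:
  "fixed_points (\<lambda>_. 0) upper (net threshold) =
     {x. (\<forall>k. x k \<in> {0, 1}) \<and> (\<forall>k. k \<notin> S \<longrightarrow> x k = ground_val k) \<and>
         (\<forall>k\<in>S. x k = sign_act (insign k) (x (pred k)))}" (is "_ = ?F")
proof
  show "fixed_points (\<lambda>_. 0) upper (net threshold) \<subseteq> ?F"
  proof
    fix x assume "x \<in> fixed_points (\<lambda>_. 0) upper (net threshold)"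
    then have fixed: "net threshold x = x" unfolding fixed_points_def by auto
    have bool: "x k \<in> {0, 1}" for k using net_01[of threshold x k] fixed by simp
    have ground: "x k = ground_val k" if "k \<notin> S" for k
      using fixed_point_outside_S[OF bool fixed that] .
    have "x k = sign_act (insign k) (x (pred k))" if "k \<in> S" for k
      using net_on_S[OF bool that ground] fixed by simp
    then show "x \<in> ?F" using bool ground by blast
  qed
next
  show "?F \<subseteq> fixed_points (\<lambda>_. 0) upper (net threshold)"
  proof
    fix x assume "x \<in> ?F"
    then have bool: "\<And>k. x k \<in> {0, 1}" and ground: "\<And>k. k \<notin> S \<Longrightarrow> x k = ground_val k"
      and cyc: "\<And>k. k \<in> S \<Longrightarrow> x k = sign_act (insign k) (x (pred k))" by auto
    have "net threshold x i = x i" for i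
    proof (cases "i \<in> S")
      case True
      then show ?thesis using net_on_S[OF bool True ground] cyc by simp
    next
      case False
      have "net threshold x i = ground_val i"
        by (rule net_outside_S[OF bool False]) (use ground anchor_props(2)[OF False] in blast)
      then show ?thesis using ground[OF False] by simp
    qed
    then have "net threshold x = x" by auto
    moreover have "x \<in> box (\<lambda>_. 0) upper"
      using net_in_box[OF admissible_threshold, of x] calculation by simp
    ultimately show "x \<in> fixed_points (\<lambda>_. 0) upper (net threshold)" unfolding fixed_points_def by auto
  qed
qed

lemma ex_fds_with_fixed_points:
  "\<exists>lo hi f g. fds_on E lo hi f \<and> degree_bounded lo hi f \<and> (\<forall>k. k \<notin> S \<longrightarrow> g k \<in> {0, 1}) \<and>
     fixed_points lo hi f =
       {x. (\<forall>k. x k \<in> {0, 1}) \<and> (\<forall>k. k \<notin> S \<longrightarrow> x k = g k) \<and>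
           (\<forall>k\<in>S. x k = sign_act (insign k) (x (pred k)))}"
proof (intro exI conjI)
  show "fds_on E (\<lambda>_. 0) upper (net threshold)"
    unfolding fds_on_def using is_fds_net interaction_graph_net admissible_threshold by blast
  show "degree_bounded (\<lambda>_. 0) upper (net threshold)"
    using degree_bounded_net admissible_threshold by blast
  show "\<forall>k. k \<notin> S \<longrightarrow> ground_val k \<in> {0, 1}" using ground_val_01 by blast
qed (fact fixed_points_net)

end

section \<open>Boolean labellings along a cycle\<close>

definition neg_prefix :: "('a \<times> sign) list \<Rightarrow> nat \<Rightarrow> nat" where
  "neg_prefix c q = length (filter (\<lambda>s. s = Neg) (take q (map snd c)))"

lemma neg_prefix_0 [simp]: "neg_prefix c 0 = 0"
  unfolding neg_prefix_def by simp

lemma neg_prefix_Suc: "q < length c \<Longrightarrow> neg_prefix c (Suc q) = neg_prefix c q + of_bool (snd (c ! q) = Neg)"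
  unfolding neg_prefix_def by (simp add: take_Suc_conv_app_nth)

lemma cycle_positive_iff_neg_prefix: "cycle_positive c \<longleftrightarrow> even (neg_prefix c (length c))"
  unfolding cycle_positive_def neg_prefix_def by simp

lemma sign_act_mod_2: "v \<in> {0, 1} \<Longrightarrow> sign_act s v = (v + of_bool (s = Neg)) mod 2"
  unfolding sign_act_def by (cases s) auto

lemma sign_act_step:
  assumes "q < length c" and "v = (b + int (neg_prefix c q)) mod 2"
  shows "sign_act (snd (c ! q)) v = (b + int (neg_prefix c (Suc q))) mod 2"
proof -
  have "v \<in> {0, 1}" using assms(2) by auto
  then show ?thesis
    using assms by (simp add: sign_act_mod_2 neg_prefix_Suc mod_add_left_eq add.assoc)
qed

lemma cycle_walk_parity:
  fixes y :: "nat \<Rightarrow> int"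
  assumes "c \<noteq> []" and "y 0 \<in> {0, 1}"
    and eqs: "\<forall>q<length c. y ((q + 1) mod length c) = sign_act (snd (c ! q)) (y q)"
  shows "q \<le> length c \<Longrightarrow> y (q mod length c) = (y 0 + int (neg_prefix c q)) mod 2"
proof (induction q)
  case 0
  then show ?case using assms(2) by auto
next
  case (Suc q)
  then have q: "q < length c" by simp
  then have "y (Suc q mod length c) = sign_act (snd (c ! q)) (y q)" using eqs by simp
  then show ?case using sign_act_step[OF q] Suc.IH q by simp
qed

lemma cycle_equations_iff:
  fixes y :: "nat \<Rightarrow> int"
  assumes "c \<noteq> []" and "y 0 \<in> {0, 1}"
  shows "(\<forall>q<length c. y ((q + 1) mod length c) = sign_act (snd (c ! q)) (y q)) \<longleftrightarrow>
    (\<forall>q<length c. y q = (y 0 + int (neg_prefix c q)) mod 2) \<and> even (neg_prefix c (length c))"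
proof
  assume eqs: "\<forall>q<length c. y ((q + 1) mod length c) = sign_act (snd (c ! q)) (y q)"
  have "y 0 = (y 0 + int (neg_prefix c (length c))) mod 2"
    using cycle_walk_parity[OF assms eqs, of "length c"] by simp
  then have "even (neg_prefix c (length c))" using assms(2) by auto presburger+
  then show "(\<forall>q<length c. y q = (y 0 + int (neg_prefix c q)) mod 2) \<and> even (neg_prefix c (length c))"
    using cycle_walk_parity[OF assms eqs] by (metis less_imp_le mod_less)
next
  assume par: "(\<forall>q<length c. y q = (y 0 + int (neg_prefix c q)) mod 2) \<and> even (neg_prefix c (length c))"
  show "\<forall>q<length c. y ((q + 1) mod length c) = sign_act (snd (c ! q)) (y q)"
  proof (intro allI impI)
    fix q assume q: "q < length c"
    have "y ((q + 1) mod length c) = (y 0 + int (neg_prefix c (Suc q))) mod 2"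
    proof (cases "Suc q = length c")
      case True
      then show ?thesis using par assms(2) by (auto elim: evenE)
    next
      case False
      then show ?thesis using par q by simp
    qed
    then show "y ((q + 1) mod length c) = sign_act (snd (c ! q)) (y q)"
      using sign_act_step[OF q] par q by simp
  qed
qed

section \<open>Disjoint cycles\<close>

lemma ex_ranking_with_first:
  assumes "finite A" and "a \<in> A"
  obtains r :: "'a \<Rightarrow> int" where "inj_on r A" and "r a = 1" and "\<And>u. u \<in> A \<Longrightarrow> u \<noteq> a \<Longrightarrow> 2 \<le> r u"
    and "\<And>u. u \<in> A \<Longrightarrow> 1 \<le> r u \<and> r u \<le> int (card A)"
proof -
  obtain h where h: "bij_betw h (A - {a}) {0..<card (A - {a})}"
    using ex_bij_betw_finite_nat assms(1) by blast
  have h_less: "h u < card A - 1" if "u \<in> A - {a}" for u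
    using h that assms unfolding bij_betw_def by auto
  define r where "r u = (if u = a then 1 else int (h u) + 2)" for u
  have "inj_on r A"
    using h unfolding bij_betw_def inj_on_def r_def by auto
  moreover have "1 \<le> r u \<and> r u \<le> int (card A)" if "u \<in> A" for u
    using h_less[of u] that assms card_gt_0_iff[of A] unfolding r_def by auto
  ultimately show ?thesis using that unfolding r_def by auto
qed

text \<open>Giving the arc of rank 1 the rank of an arc with another target leaves no rank 1.\<close>
lemma ex_ranking_avoiding_1:
  assumes "finite A" and "a \<in> A" and "b \<in> A" and "fst a \<noteq> fst b"
  obtains r :: "'a \<times> 'b \<Rightarrow> int" where "\<And>u. u \<in> A \<Longrightarrow> 2 \<le> r u \<and> r u \<le> int (card A)"
    and "\<And>u u'. u \<in> A \<Longrightarrow> u' \<in> A \<Longrightarrow> u \<noteq> u' \<Longrightarrow> r u = r u' \<Longrightarrow> fst u \<noteq> fst u'"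
proof -
  obtain r where r: "inj_on r A" "r a = 1" "\<And>u. u \<in> A \<Longrightarrow> u \<noteq> a \<Longrightarrow> 2 \<le> r u"
    "\<And>u. u \<in> A \<Longrightarrow> 1 \<le> r u \<and> r u \<le> int (card A)"
    using ex_ranking_with_first[OF assms(1,2)] by blast
  have "a \<noteq> b" using assms(4) by auto
  show ?thesis
  proof (rule that[of "r(a := r b)"])
    show "2 \<le> (r(a := r b)) u \<and> (r(a := r b)) u \<le> int (card A)" if "u \<in> A" for u
      using r(3,4) that assms(3) \<open>a \<noteq> b\<close> by auto
    show "fst u \<noteq> fst u'" if "u \<in> A" "u' \<in> A" "u \<noteq> u'" "(r(a := r b)) u = (r(a := r b)) u'" for u u'
      using that r(1) assms(2-4) unfolding inj_on_def by (auto split: if_splits)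
  qed
qed

lemma prev_next_mod: "0 < (n::nat) \<Longrightarrow> q < n \<Longrightarrow> ((q + n - 1) mod n + 1) mod n = q"
  by (cases q) (auto simp: mod_Suc)

lemma next_prev_mod: "0 < (n::nat) \<Longrightarrow> q < n \<Longrightarrow> ((q + 1) mod n + n - 1) mod n = q"
  by (cases "Suc q = n") auto

locale disjoint_cycles =
  fixes E :: "('v::finite) sdigraph" and Cs :: "('v \<times> sign) list list"
  assumes connected: "sconnected E" and Cs_nonempty: "Cs \<noteq> []"
    and cycles: "\<forall>c\<in>set Cs. is_cycle E c"
    and disjoint: "\<forall>a<length Cs. \<forall>b<length Cs. a \<noteq> b \<longrightarrow> cycle_vertices (Cs ! a) \<inter> cycle_vertices (Cs ! b) = {}"
begin

definition cyc_len :: "nat \<Rightarrow> nat" where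
  "cyc_len a = length (Cs ! a)"

definition cyc_vertex :: "nat \<Rightarrow> nat \<Rightarrow> 'v" where
  "cyc_vertex a q = fst (Cs ! a ! q)"

definition cycle_set :: "'v set" where
  "cycle_set = {cyc_vertex a q | a q. a < length Cs \<and> q < cyc_len a}"

lemma is_cycle_nth: "a < length Cs \<Longrightarrow> is_cycle E (Cs ! a)"
  using cycles nth_mem by blast

lemma cyc_len_pos: "a < length Cs \<Longrightarrow> 0 < cyc_len a"
  using is_cycle_nth unfolding is_cycle_def cyc_len_def by auto

lemma cyc_arc:
  "a < length Cs \<Longrightarrow> q < cyc_len a \<Longrightarrow>
     (cyc_vertex a q, cyc_vertex a ((q + 1) mod cyc_len a), snd (Cs ! a ! q)) \<in> E"
  using is_cycle_nth unfolding is_cycle_def cyc_len_def cyc_vertex_def by auto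

lemma cyc_vertex_in_cycle_set: "a < length Cs \<Longrightarrow> q < cyc_len a \<Longrightarrow> cyc_vertex a q \<in> cycle_set"
  unfolding cycle_set_def by auto

lemma cyc_vertex_inj:
  assumes "a < length Cs" "q < cyc_len a" "a' < length Cs" "q' < cyc_len a'"
    and "cyc_vertex a q = cyc_vertex a' q'"
  shows "a = a' \<and> q = q'"
proof -
  have mem: "cyc_vertex b r \<in> cycle_vertices (Cs ! b)" if "r < cyc_len b" for b r
    using that unfolding cycle_vertices_def cyc_vertex_def cyc_len_def by (metis length_map nth_map nth_mem)
  have "a = a'"
  proof (rule ccontr)
    assume "a \<noteq> a'"
    then have "cycle_vertices (Cs ! a) \<inter> cycle_vertices (Cs ! a') = {}"
      using disjoint assms(1,3) by blast
    then show False using mem[OF assms(2)] mem[OF assms(4)] assms(5) by auto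
  qed
  moreover have "distinct (map fst (Cs ! a))" using is_cycle_nth[OF assms(1)] unfolding is_cycle_def by simp
  ultimately show ?thesis
    using assms nth_eq_iff_index_eq unfolding cyc_vertex_def cyc_len_def by fastforce
qed

definition position :: "'v \<Rightarrow> nat \<times> nat" where
  "position i = (SOME (a, q). a < length Cs \<and> q < cyc_len a \<and> cyc_vertex a q = i)"

lemma position_in_cycle_set:
  assumes "i \<in> cycle_set"
  obtains a q where "position i = (a, q)" "a < length Cs" "q < cyc_len a" "cyc_vertex a q = i"
proof -
  have "\<exists>p. case p of (a, q) \<Rightarrow> a < length Cs \<and> q < cyc_len a \<and> cyc_vertex a q = i"
    using assms unfolding cycle_set_def by auto
  then have "case position i of (a, q) \<Rightarrow> a < length Cs \<and> q < cyc_len a \<and> cyc_vertex a q = i"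
    unfolding position_def by (rule someI_ex)
  then show ?thesis using that by (cases "position i") auto
qed

lemma position_cyc_vertex: "a < length Cs \<Longrightarrow> q < cyc_len a \<Longrightarrow> position (cyc_vertex a q) = (a, q)"
  by (metis cyc_vertex_inj cyc_vertex_in_cycle_set position_in_cycle_set)

definition cyc_next :: "'v \<Rightarrow> 'v \<times> sign" where
  "cyc_next j = (case position j of (a, q) \<Rightarrow> (cyc_vertex a ((q + 1) mod cyc_len a), snd (Cs ! a ! q)))"

definition cyc_pred :: "'v \<Rightarrow> 'v" where
  "cyc_pred i = (case position i of (a, q) \<Rightarrow> cyc_vertex a ((q + cyc_len a - 1) mod cyc_len a))"

definition cyc_sign :: "'v \<Rightarrow> sign" where
  "cyc_sign i = (case position i of (a, q) \<Rightarrow> snd (Cs ! a ! ((q + cyc_len a - 1) mod cyc_len a)))"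

lemma cyc_next_cyc_vertex:
  "a < length Cs \<Longrightarrow> q < cyc_len a \<Longrightarrow>
     cyc_next (cyc_vertex a q) = (cyc_vertex a ((q + 1) mod cyc_len a), snd (Cs ! a ! q))"
  unfolding cyc_next_def by (simp add: position_cyc_vertex)

lemma cyc_pred_of_next:
  assumes "j \<in> cycle_set" and "cyc_next j = (i, s)"
  shows "i \<in> cycle_set \<and> cyc_pred i = j \<and> cyc_sign i = s"
proof -
  obtain a q where aq: "position j = (a, q)" "a < length Cs" "q < cyc_len a" "cyc_vertex a q = j"
    using position_in_cycle_set[OF assms(1)] .
  have q': "(q + 1) mod cyc_len a < cyc_len a" using cyc_len_pos[OF aq(2)] by simp
  have "i = cyc_vertex a ((q + 1) mod cyc_len a)" "s = snd (Cs ! a ! q)"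
    using assms(2) aq unfolding cyc_next_def by auto
  then show ?thesis
    using cyc_vertex_in_cycle_set[OF aq(2) q'] position_cyc_vertex[OF aq(2) q'] aq
      next_prev_mod[OF cyc_len_pos[OF aq(2)] aq(3)]
    unfolding cyc_pred_def cyc_sign_def by simp
qed

lemma cyc_next_of_pred:
  assumes "i \<in> cycle_set"
  shows "cyc_pred i \<in> cycle_set \<and> cyc_next (cyc_pred i) = (i, cyc_sign i) \<and> (cyc_pred i, i, cyc_sign i) \<in> E"
proof -
  obtain a q where aq: "position i = (a, q)" "a < length Cs" "q < cyc_len a" "cyc_vertex a q = i"
    using position_in_cycle_set[OF assms] .
  define p where "p = (q + cyc_len a - 1) mod cyc_len a"
  have p: "p < cyc_len a" using cyc_len_pos[OF aq(2)] unfolding p_def by simp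
  have "cyc_pred i = cyc_vertex a p" "cyc_sign i = snd (Cs ! a ! p)"
    using aq(1) unfolding cyc_pred_def cyc_sign_def p_def by auto
  then show ?thesis
    using cyc_vertex_in_cycle_set[OF aq(2) p] cyc_next_cyc_vertex[OF aq(2) p] cyc_arc[OF aq(2) p] aq
      prev_next_mod[OF cyc_len_pos[OF aq(2)] aq(3)]
    unfolding p_def by simp
qed

definition out_arcs :: "'v \<Rightarrow> ('v \<times> sign) set" where
  "out_arcs j = {(i, s). (j, i, s) \<in> E}"

definition good_ranks :: "'v \<Rightarrow> ('v \<times> sign \<Rightarrow> int) \<Rightarrow> bool" where
  "good_ranks j r \<longleftrightarrow>
     (\<forall>u\<in>out_arcs j. 1 \<le> r u \<and> r u \<le> int (card (out_arcs j))) \<and>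
     (\<forall>u\<in>out_arcs j. \<forall>u'\<in>out_arcs j. u \<noteq> u' \<and> r u = r u' \<longrightarrow> fst u \<noteq> fst u') \<and>
     (j \<in> cycle_set \<longrightarrow> r (cyc_next j) = 1 \<and> (\<forall>u\<in>out_arcs j. u \<noteq> cyc_next j \<longrightarrow> 2 \<le> r u)) \<and>
     (j \<notin> cycle_set \<longrightarrow> (\<forall>u\<in>out_arcs j. r u = 1 \<longrightarrow> (\<forall>u'\<in>out_arcs j. fst u' = fst u)))"

lemma ex_good_ranks: "\<exists>r. good_ranks j r"
proof -
  have fin: "finite (out_arcs j)" by simp
  consider (cycle) "j \<in> cycle_set"
    | (no_arcs) "j \<notin> cycle_set" "out_arcs j = {}"
    | (one_target) u where "j \<notin> cycle_set" "u \<in> out_arcs j" "\<forall>u'\<in>out_arcs j. fst u' = fst u"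
    | (two_targets) u u' where "j \<notin> cycle_set" "u \<in> out_arcs j" "u' \<in> out_arcs j" "fst u \<noteq> fst u'"
    by blast
  then show ?thesis
  proof cases
    case cycle
    have next_arc: "cyc_next j \<in> out_arcs j"
      using cyc_next_of_pred cyc_pred_of_next[OF cycle] unfolding out_arcs_def by (cases "cyc_next j") auto
    obtain r where r: "inj_on r (out_arcs j)" "r (cyc_next j) = 1"
      "\<And>u. u \<in> out_arcs j \<Longrightarrow> u \<noteq> cyc_next j \<Longrightarrow> 2 \<le> r u"
      "\<And>u. u \<in> out_arcs j \<Longrightarrow> 1 \<le> r u \<and> r u \<le> int (card (out_arcs j))"
      using ex_ranking_with_first[OF fin next_arc] by blast
    have "\<forall>u\<in>out_arcs j. \<forall>u'\<in>out_arcs j. u \<noteq> u' \<and> r u = r u' \<longrightarrow> fst u \<noteq> fst u'"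
      using inj_onD[OF r(1)] by blast
    then have "good_ranks j r" unfolding good_ranks_def using r(2-4) cycle by blast
    then show ?thesis by blast
  next
    case no_arcs
    then show ?thesis unfolding good_ranks_def by auto
  next
    case one_target
    obtain r where r: "inj_on r (out_arcs j)"
      "\<And>u'. u' \<in> out_arcs j \<Longrightarrow> 1 \<le> r u' \<and> r u' \<le> int (card (out_arcs j))"
      using ex_ranking_with_first[OF fin one_target(2)] by metis
    have "\<forall>u\<in>out_arcs j. \<forall>u'\<in>out_arcs j. u \<noteq> u' \<and> r u = r u' \<longrightarrow> fst u \<noteq> fst u'"
      using inj_onD[OF r(1)] by blast
    moreover have "\<forall>u\<^sub>1\<in>out_arcs j. \<forall>u'\<in>out_arcs j. fst u' = fst u\<^sub>1"
      using one_target(3) by metis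
    ultimately have "good_ranks j r" unfolding good_ranks_def using r(2) one_target(1) by blast
    then show ?thesis by blast
  next
    case two_targets
    obtain r where r: "\<And>u. u \<in> out_arcs j \<Longrightarrow> 2 \<le> r u \<and> r u \<le> int (card (out_arcs j))"
      and "\<And>u u'. u \<in> out_arcs j \<Longrightarrow> u' \<in> out_arcs j \<Longrightarrow> u \<noteq> u' \<Longrightarrow> r u = r u' \<Longrightarrow> fst u \<noteq> fst u'"
      using ex_ranking_avoiding_1[OF fin two_targets(2-4)] by blast
    then have "good_ranks j r" unfolding good_ranks_def using two_targets(1) by fastforce
    then show ?thesis by blast
  qed
qed

lemma ex_threshold_network: "\<exists>thr. threshold_network E thr cycle_set cyc_pred cyc_sign"
proof -
  obtain R where R: "\<And>j. good_ranks j (R j)" using ex_good_ranks by metis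
  define thr where "thr e = (case e of (j, u) \<Rightarrow> R j u)" for e :: "'v \<times> 'v \<times> sign"
  have arc: "(j, i, s) \<in> E \<longleftrightarrow> (i, s) \<in> out_arcs j" for j i s unfolding out_arcs_def by simp
  have outdeg: "outdeg E j = card (out_arcs j)" for j unfolding outdeg_def out_arcs_def by simp
  have "threshold_network E thr cycle_set cyc_pred cyc_sign"
  proof (unfold_locales)
    show "1 \<le> thr (j, i, s) \<and> thr (j, i, s) \<le> int (outdeg E j)" if "(j, i, s) \<in> E" for j i s
      using R[of j] that unfolding good_ranks_def thr_def outdeg arc by auto
    show "thr (j, i, Pos) \<noteq> thr (j, i, Neg)" if "(j, i, Pos) \<in> E" "(j, i, Neg) \<in> E" for j i
    proof -
      have "\<forall>u\<in>out_arcs j. \<forall>u'\<in>out_arcs j. u \<noteq> u' \<and> R j u = R j u' \<longrightarrow> fst u \<noteq> fst u'"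
        using R[of j] unfolding good_ranks_def by blast
      then show ?thesis using that unfolding thr_def arc by fastforce
    qed
    show "sconnected E" using connected .
    show "cycle_set \<noteq> {}"
      using cyc_vertex_in_cycle_set[of 0 0] Cs_nonempty cyc_len_pos[of 0] by auto
    show "(cyc_pred i, i, cyc_sign i) \<in> E \<and> cyc_pred i \<in> cycle_set \<and> thr (cyc_pred i, i, cyc_sign i) = 1"
      if "i \<in> cycle_set" for i
      using cyc_next_of_pred[OF that] R[of "cyc_pred i"] unfolding good_ranks_def thr_def by auto
    show "i \<in> cycle_set \<and> cyc_pred i = j \<and> cyc_sign i = s"
      if "(j, i, s) \<in> E" "thr (j, i, s) = 1" "j \<in> cycle_set" for j i s
    proof -
      have "\<forall>u\<in>out_arcs j. u \<noteq> cyc_next j \<longrightarrow> 2 \<le> R j u"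
        using R[of j] that(3) unfolding good_ranks_def by blast
      then have "(i, s) = cyc_next j" using that(1,2) unfolding thr_def arc by force
      then show ?thesis using cyc_pred_of_next[OF that(3)] by metis
    qed
    show "i' = i" if "(j, i, s) \<in> E" "thr (j, i, s) = 1" "j \<notin> cycle_set" "(j, i', s') \<in> E" for j i s i' s'
    proof -
      have "\<forall>u\<in>out_arcs j. R j u = 1 \<longrightarrow> (\<forall>u'\<in>out_arcs j. fst u' = fst u)"
        using R[of j] that(3) unfolding good_ranks_def by blast
      then have "fst (i', s') = fst (i, s)" using that(1,2,4) unfolding thr_def arc by force
      then show ?thesis by simp
    qed
  qed
  then show ?thesis by blast
qed

definition cycle_consistent :: "('v \<Rightarrow> int) \<Rightarrow> bool" where
  "cycle_consistent x \<longleftrightarrow>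
     (\<forall>a<length Cs. \<forall>q<cyc_len a.
        x (cyc_vertex a ((q + 1) mod cyc_len a)) = sign_act (snd (Cs ! a ! q)) (x (cyc_vertex a q)))"

lemma cycle_consistent_iff_pred_rule:
  "cycle_consistent x \<longleftrightarrow> (\<forall>k\<in>cycle_set. x k = sign_act (cyc_sign k) (x (cyc_pred k)))"
proof
  assume rule: "\<forall>k\<in>cycle_set. x k = sign_act (cyc_sign k) (x (cyc_pred k))"
  show "cycle_consistent x"
    unfolding cycle_consistent_def
  proof (intro allI impI)
    fix a q assume a: "a < length Cs" and q: "q < cyc_len a"
    show "x (cyc_vertex a ((q + 1) mod cyc_len a)) = sign_act (snd (Cs ! a ! q)) (x (cyc_vertex a q))"
      using cyc_pred_of_next[OF cyc_vertex_in_cycle_set[OF a q] cyc_next_cyc_vertex[OF a q]] rule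
      by metis
  qed
next
  assume cons: "cycle_consistent x"
  show "\<forall>k\<in>cycle_set. x k = sign_act (cyc_sign k) (x (cyc_pred k))"
  proof
    fix k assume k: "k \<in> cycle_set"
    have p: "cyc_pred k \<in> cycle_set" "cyc_next (cyc_pred k) = (k, cyc_sign k)"
      using cyc_next_of_pred[OF k] by auto
    obtain a q where a: "a < length Cs" and q: "q < cyc_len a" and v: "cyc_vertex a q = cyc_pred k"
      using position_in_cycle_set[OF p(1)] by metis
    have eq: "x (cyc_vertex a ((q + 1) mod cyc_len a)) = sign_act (snd (Cs ! a ! q)) (x (cyc_vertex a q))"
      using cons a q unfolding cycle_consistent_def by blast
    have "(k, cyc_sign k) = cyc_next (cyc_vertex a q)" using p(2) v by simp
    also have "\<dots> = (cyc_vertex a ((q + 1) mod cyc_len a), snd (Cs ! a ! q))"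
      by (rule cyc_next_cyc_vertex[OF a q])
    finally have "k = cyc_vertex a ((q + 1) mod cyc_len a) \<and> cyc_sign k = snd (Cs ! a ! q)"
      unfolding prod.inject .
    then show "x k = sign_act (cyc_sign k) (x (cyc_pred k))"
      using eq v by metis
  qed
qed

lemma ex_fds_with_cycle_consistent_fixed_points:
  "\<exists>lo hi f g. fds_on E lo hi f \<and> degree_bounded lo hi f \<and> (\<forall>k. k \<notin> cycle_set \<longrightarrow> g k \<in> {0, 1}) \<and>
     fixed_points lo hi f =
       {x. (\<forall>k. x k \<in> {0, 1}) \<and> (\<forall>k. k \<notin> cycle_set \<longrightarrow> x k = g k) \<and> cycle_consistent x}"
proof -
  obtain thr where "threshold_network E thr cycle_set cyc_pred cyc_sign"
    using ex_threshold_network by blast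
  then show ?thesis
    unfolding cycle_consistent_iff_pred_rule by (rule threshold_network.ex_fds_with_fixed_points)
qed

definition cycle_solutions :: "('v \<Rightarrow> int) \<Rightarrow> ('v \<Rightarrow> int) set" where
  "cycle_solutions g = {x. (\<forall>k. x k \<in> {0, 1}) \<and> (\<forall>k. k \<notin> cycle_set \<longrightarrow> x k = g k) \<and> cycle_consistent x}"

lemma cycle_consistent_iff_parity:
  assumes "\<And>k. x k \<in> {0, 1}"
  shows "cycle_consistent x \<longleftrightarrow>
    (\<forall>a<length Cs. (\<forall>q<cyc_len a. x (cyc_vertex a q) = (x (cyc_vertex a 0) + int (neg_prefix (Cs ! a) q)) mod 2) \<and>
       even (neg_prefix (Cs ! a) (cyc_len a)))"
proof -
  have "(\<forall>q<cyc_len a. x (cyc_vertex a ((q + 1) mod cyc_len a)) = sign_act (snd (Cs ! a ! q)) (x (cyc_vertex a q))) \<longleftrightarrow>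
    (\<forall>q<cyc_len a. x (cyc_vertex a q) = (x (cyc_vertex a 0) + int (neg_prefix (Cs ! a) q)) mod 2) \<and>
       even (neg_prefix (Cs ! a) (cyc_len a))" if "a < length Cs" for a
    using cycle_equations_iff[of "Cs ! a" "\<lambda>q. x (cyc_vertex a q)"] cyc_len_pos[OF that] assms
    unfolding cyc_len_def by auto
  then show ?thesis unfolding cycle_consistent_def by blast
qed

lemma cycle_solutions_empty:
  assumes "\<exists>c\<in>set Cs. \<not> cycle_positive c"
  shows "cycle_solutions g = {}"
proof -
  obtain a where "a < length Cs" "\<not> cycle_positive (Cs ! a)" using assms by (metis in_set_conv_nth)
  then show ?thesis
    using cycle_consistent_iff_parity unfolding cycle_solutions_def cycle_positive_iff_neg_prefix cyc_len_def
    by blast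
qed

definition solution_of :: "('v \<Rightarrow> int) \<Rightarrow> nat set \<Rightarrow> 'v \<Rightarrow> int" where
  "solution_of g B v =
     (if v \<in> cycle_set then (case position v of (a, q) \<Rightarrow> (of_bool (a \<in> B) + int (neg_prefix (Cs ! a) q)) mod 2)
      else g v)"

lemma solution_of_cyc_vertex:
  "a < length Cs \<Longrightarrow> q < cyc_len a \<Longrightarrow>
     solution_of g B (cyc_vertex a q) = (of_bool (a \<in> B) + int (neg_prefix (Cs ! a) q)) mod 2"
  unfolding solution_of_def by (simp add: position_cyc_vertex cyc_vertex_in_cycle_set)

lemma solution_of_cyc_vertex_0:
  "a < length Cs \<Longrightarrow> solution_of g B (cyc_vertex a 0) = of_bool (a \<in> B)"
  using solution_of_cyc_vertex[OF _ cyc_len_pos] by simp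

lemma cycle_solutions_eq_image:
  assumes pos: "\<forall>c\<in>set Cs. cycle_positive c" and g: "\<And>k. k \<notin> cycle_set \<Longrightarrow> g k \<in> {0, 1}"
  shows "cycle_solutions g = solution_of g ` Pow {..<length Cs}"
proof
  have even: "even (neg_prefix (Cs ! a) (cyc_len a))" if "a < length Cs" for a
    using pos that unfolding cycle_positive_iff_neg_prefix cyc_len_def by simp
  show "solution_of g ` Pow {..<length Cs} \<subseteq> cycle_solutions g"
  proof
    fix x assume "x \<in> solution_of g ` Pow {..<length Cs}"
    then obtain B where x: "x = solution_of g B" by blast
    have bool: "x k \<in> {0, 1}" for k
      using g[of k] unfolding x solution_of_def by (auto split: prod.split)
    moreover have "cycle_consistent x"
      unfolding cycle_consistent_iff_parity[OF bool]
      using even by (simp add: x solution_of_cyc_vertex solution_of_cyc_vertex_0)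
    ultimately show "x \<in> cycle_solutions g" unfolding cycle_solutions_def x solution_of_def by simp
  qed
  show "cycle_solutions g \<subseteq> solution_of g ` Pow {..<length Cs}"
  proof
    fix x assume "x \<in> cycle_solutions g"
    then have bool: "\<And>k. x k \<in> {0, 1}" and off: "\<And>k. k \<notin> cycle_set \<Longrightarrow> x k = g k"
      and cons: "cycle_consistent x"
      unfolding cycle_solutions_def by auto
    define B where "B = {a. a < length Cs \<and> x (cyc_vertex a 0) = 1}"
    have "x v = solution_of g B v" for v
    proof (cases "v \<in> cycle_set")
      case True
      then obtain a q where "a < length Cs" "q < cyc_len a" "cyc_vertex a q = v"
        using position_in_cycle_set by metis
      moreover have "x (cyc_vertex a 0) = of_bool (a \<in> B)" if "a < length Cs" for a
        using bool[of "cyc_vertex a 0"] that unfolding B_def by auto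
      ultimately show ?thesis
        using cons solution_of_cyc_vertex unfolding cycle_consistent_iff_parity[OF bool] by metis
    qed (simp add: off solution_of_def)
    moreover have "B \<in> Pow {..<length Cs}" unfolding B_def by auto
    ultimately show "x \<in> solution_of g ` Pow {..<length Cs}" by blast
  qed
qed

lemma inj_on_solution_of: "inj_on (solution_of g) (Pow {..<length Cs})"
proof (rule inj_onI)
  fix B B' assume B: "B \<in> Pow {..<length Cs}" "B' \<in> Pow {..<length Cs}"
    and eq: "solution_of g B = solution_of g B'"
  have "a \<in> B \<longleftrightarrow> a \<in> B'" if "a < length Cs" for a
    using fun_cong[OF eq, of "cyc_vertex a 0"] solution_of_cyc_vertex_0[OF that] by (simp add: of_bool_eq_iff)
  then show "B = B'" using B by auto
qed

lemma card_cycle_solutions: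
  assumes "\<forall>c\<in>set Cs. cycle_positive c" and "\<And>k. k \<notin> cycle_set \<Longrightarrow> g k \<in> {0, 1}"
  shows "card (cycle_solutions g) = 2 ^ length Cs"
  using card_image[OF inj_on_solution_of] cycle_solutions_eq_image[OF assms] by (simp add: card_Pow)

lemma ex_fds_for_disjoint_cycles:
  "\<exists>lo hi f. fds_on E lo hi f \<and> degree_bounded lo hi f \<and>
     ((\<forall>c\<in>set Cs. cycle_positive c) \<longrightarrow> card (fixed_points lo hi f) = 2 ^ length Cs) \<and>
     ((\<exists>c\<in>set Cs. \<not> cycle_positive c) \<longrightarrow> fixed_points lo hi f = {})"
proof -
  obtain lo hi f g where f: "fds_on E lo hi f" "degree_bounded lo hi f"
    and g: "\<forall>k. k \<notin> cycle_set \<longrightarrow> g k \<in> {0, 1}" and fp: "fixed_points lo hi f = cycle_solutions g"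
    using ex_fds_with_cycle_consistent_fixed_points unfolding cycle_solutions_def by blast
  have "(\<forall>c\<in>set Cs. cycle_positive c) \<longrightarrow> card (fixed_points lo hi f) = 2 ^ length Cs"
    using card_cycle_solutions g unfolding fp by blast
  moreover have "(\<exists>c\<in>set Cs. \<not> cycle_positive c) \<longrightarrow> fixed_points lo hi f = {}"
    using cycle_solutions_empty unfolding fp by blast
  ultimately show ?thesis using f by blast
qed

end

theorem corollary6:
  fixes E :: "('v::finite) sdigraph"
  assumes "sconnected E"
  shows "((\<exists>c. negative_cycle E c) \<longrightarrow>
            (\<exists>lo hi f. fds_on E lo hi f \<and> degree_bounded lo hi f \<and> fixed_points lo hi f = {}))
       \<and> ((\<exists>c. positive_cycle E c) \<longrightarrow>
            (\<exists>lo hi f. fds_on E lo hi f \<and> degree_bounded lo hi f \<and> card (fixed_points lo hi f) = 2))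
       \<and> (\<forall>Cs :: ('v \<times> sign) list list.
            length Cs \<ge> 1 \<and> (\<forall>c \<in> set Cs. positive_cycle E c) \<and>
            (\<forall>a < length Cs. \<forall>b < length Cs. a \<noteq> b \<longrightarrow>
               cycle_vertices (Cs ! a) \<inter> cycle_vertices (Cs ! b) = {}) \<longrightarrow>
            (\<exists>lo hi f. fds_on E lo hi f \<and> degree_bounded lo hi f \<and>
               card (fixed_points lo hi f) = 2 ^ length Cs))"
proof (intro conjI impI allI)
  assume "\<exists>c. negative_cycle E c"
  then obtain c where c: "is_cycle E c" "\<not> cycle_positive c" unfolding negative_cycle_def by blast
  interpret disjoint_cycles E "[c]" using assms c(1) by unfold_locales auto
  show "\<exists>lo hi f. fds_on E lo hi f \<and> degree_bounded lo hi f \<and> fixed_points lo hi f = {}"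
    using ex_fds_for_disjoint_cycles c(2) by auto
next
  assume "\<exists>c. positive_cycle E c"
  then obtain c where c: "is_cycle E c" "cycle_positive c" unfolding positive_cycle_def by blast
  interpret disjoint_cycles E "[c]" using assms c(1) by unfold_locales auto
  show "\<exists>lo hi f. fds_on E lo hi f \<and> degree_bounded lo hi f \<and> card (fixed_points lo hi f) = 2"
    using ex_fds_for_disjoint_cycles c(2) by auto
next
  fix Cs :: "('v \<times> sign) list list"
  assume Cs: "length Cs \<ge> 1 \<and> (\<forall>c \<in> set Cs. positive_cycle E c) \<and>
    (\<forall>a < length Cs. \<forall>b < length Cs. a \<noteq> b \<longrightarrow> cycle_vertices (Cs ! a) \<inter> cycle_vertices (Cs ! b) = {})"
  interpret disjoint_cycles E Cs using assms Cs unfolding positive_cycle_def by unfold_locales auto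
  show "\<exists>lo hi f. fds_on E lo hi f \<and> degree_bounded lo hi f \<and> card (fixed_points lo hi f) = 2 ^ length Cs"
    using ex_fds_for_disjoint_cycles Cs unfolding positive_cycle_def by auto
qed

end
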